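(* Let $E$ be a finite set and let $\mathcal{Q}\subseteq 2^E$ be a weakly Rayleigh set-system. Then $\mathcal{Q}$ is a convex delta-matroid.
   Context: For a function $\omega:2^E\to[0,\infty)$, not identically zero, let $\mathbf{y}=\{y_e: e\in E\}$ be commuting indeterminates, $\mathbf{y}^S=\prod_{e\in S}y_e$, and $Z(\omega;\mathbf{y})=\sum_{S\subseteq E}\omega(S)\mathbf{y}^S$. For a multiaffine polynomial $Z$ write $Z^e=Z|_{y_e=0}$, $Z_e=\partial Z/\partial y_e$, $Z_{ef}=\partial^2 Z/\partial y_e\partial y_f$, and $\Delta Z\{e,f\}=Z_eZ_f-Z_{ef}Z$. $Z$ (or $\omega$) is Rayleigh if $\Delta Z\{e,f\}(\mathbf{y})\ge 0$ for all distinct $e,f\in E$ and all $\mathbf{y}$ with every $y_c>0$ (equivalently, under the probability measure $\mu(S)\propto\omega(S)\mathbf{y}^S$, the indicator variables of $e\in S$ and $f\in S$ have nonpositive covariance). The support is $\mathrm{Supp}(\omega)=\{S:\omega(S)>0\}$. A set-system $\mathcal{Q}\subseteq 2^E$ is weakly Rayleigh if there is a nonnegative $\omega$ with $\mathrm{Supp}(\omega)=\mathcal{Q}$ and $Z(\omega;\mathbf{y})$ Rayleigh. $\mathcal{Q}$ is convex if $S\subseteq T\subseteq S'$ with $S,S'\in\mathcal{Q}$ implies $T\in\mathcal{Q}$. $\mathcal{Q}$ is a delta-matroid if for all $A,B\in\mathcal{Q}$ and $e\in A\triangle B$ there is $f\in A\triangle B$ (possibly $f=e$) with $A\triangle\{e,f\}\in\mathcal{Q}$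 ($\triangle$ = symmetric difference). *)

theory Defs
  imports "HOL-Analysis.Analysis"
begin

definition Zpoly :: "'a set \<Rightarrow> ('a set \<Rightarrow> real) \<Rightarrow> ('a \<Rightarrow> real) \<Rightarrow> real" where
  "Zpoly E \<omega> y = (\<Sum>S\<in>Pow E. \<omega> S * (\<Prod>e\<in>S. y e))"

definition pderiv_var :: "'a \<Rightarrow> (('a \<Rightarrow> real) \<Rightarrow> real) \<Rightarrow> ('a \<Rightarrow> real) \<Rightarrow> real" where
  "pderiv_var e F y = deriv (\<lambda>t. F (y(e := t))) (y e)"

definition rayleigh_diff :: "'a set \<Rightarrow> ('a set \<Rightarrow> real) \<Rightarrow> 'a \<Rightarrow> 'a \<Rightarrow> ('a \<Rightarrow> real) \<Rightarrow> real" where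
  "rayleigh_diff E \<omega> e f y =
     pderiv_var e (Zpoly E \<omega>) y * pderiv_var f (Zpoly E \<omega>) y
     - pderiv_var e (pderiv_var f (Zpoly E \<omega>)) y * Zpoly E \<omega> y"

definition rayleigh :: "'a set \<Rightarrow> ('a set \<Rightarrow> real) \<Rightarrow> bool" where
  "rayleigh E \<omega> \<longleftrightarrow>
     (\<forall>e\<in>E. \<forall>f\<in>E. e \<noteq> f \<longrightarrow>
        (\<forall>y. (\<forall>c\<in>E. y c > 0) \<longrightarrow> rayleigh_diff E \<omega> e f y \<ge> 0))"

definition support :: "'a set \<Rightarrow> ('a set \<Rightarrow> real) \<Rightarrow> 'a set set" where
  "support E \<omega> = {S\<in>Pow E. \<omega> S > 0}"

text \<open>omega : 2^E -> [0,inf), not identically zero; only its values on Pow E matter.\<close>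
definition weakly_rayleigh :: "'a set \<Rightarrow> 'a set set \<Rightarrow> bool" where
  "weakly_rayleigh E Q \<longleftrightarrow>
     (\<exists>\<omega>. (\<forall>S\<in>Pow E. \<omega> S \<ge> 0) \<and> (\<exists>S\<in>Pow E. \<omega> S \<noteq> 0)
          \<and> support E \<omega> = Q \<and> rayleigh E \<omega>)"

definition convex_setsystem :: "'a set set \<Rightarrow> bool" where
  "convex_setsystem Q \<longleftrightarrow>
     (\<forall>S\<in>Q. \<forall>S'\<in>Q. \<forall>T. S \<subseteq> T \<and> T \<subseteq> S' \<longrightarrow> T \<in> Q)"

definition symdiff :: "'a set \<Rightarrow> 'a set \<Rightarrow> 'a set" where
  "symdiff A B = (A - B) \<union> (B - A)"

definition delta_matroid :: "'a set set \<Rightarrow> bool" where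
  "delta_matroid Q \<longleftrightarrow>
     (\<forall>A\<in>Q. \<forall>B\<in>Q. \<forall>e\<in>symdiff A B. \<exists>f\<in>symdiff A B. symdiff A {e, f} \<in> Q)"

end

theory Submission
  imports Defs
begin

text \<open>Substituting y_c = t^(sigma c) into the Rayleigh inequality Z_p Z_q - Z Z_pq \<ge> 0 and letting
  t \<rightarrow> \<infinity> gives a tropical exchange property of the support: if X and Y + p + q lie in
  the support (X, Y avoiding p, q), then there are U + p and V + q in the support with
  sigma(U) + sigma(V) \<ge> sigma(X) + sigma(Y), for every weight sigma. Taking sigma to be a weighted
  Hamming distance to a fixed set, convexity follows by filling an interval S \<subseteq> S' of the
  support one element at a time, and the delta-matroid exchange for A, B, e follows by induction
  on |A \<triangle> B|: when |A \<triangle> B| \<ge> 3, two of its elements lie on the same side of A, and a suitable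
  weight produces a member Z of the support with e \<in> A \<triangle> Z \<subset> A \<triangle> B.\<close>

lemma Zpoly_fun_upd_notin:
  assumes "e \<notin> F"
  shows "Zpoly F \<omega> (y(e := t)) = Zpoly F \<omega> y"
  unfolding Zpoly_def
proof (rule sum.cong[OF refl])
  fix S assume "S \<in> Pow F"
  then have "e \<notin> S" using assms by auto
  then show "\<omega> S * prod (y(e := t)) S = \<omega> S * prod y S"
    by (metis (no_types, lifting) fun_upd_other prod.cong)
qed

lemma Zpoly_insert:
  assumes "finite F" "e \<notin> F"
  shows "Zpoly (insert e F) \<omega> y = Zpoly F \<omega> y + y e * Zpoly F (\<lambda>S. \<omega> (insert e S)) y"
proof -
  have inj: "inj_on (insert e) (Pow F)"
    using assms(2) unfolding inj_on_def by (metis Pow_iff insert_absorb insert_ident subsetD)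
  have disj: "Pow F \<inter> insert e ` Pow F = {}" using assms(2) by auto
  have "Zpoly (insert e F) \<omega> y
      = (\<Sum>S\<in>Pow F. \<omega> S * prod y S) + (\<Sum>S\<in>insert e ` Pow F. \<omega> S * prod y S)"
    unfolding Zpoly_def Pow_insert using assms(1) disj by (simp add: sum.union_disjoint)
  also have "(\<Sum>S\<in>insert e ` Pow F. \<omega> S * prod y S)
      = (\<Sum>S\<in>Pow F. \<omega> (insert e S) * prod y (insert e S))"
    using inj by (simp add: sum.reindex)
  also have "\<dots> = (\<Sum>S\<in>Pow F. y e * (\<omega> (insert e S) * prod y S))"
  proof (rule sum.cong[OF refl])
    fix S assume "S \<in> Pow F"
    then have "e \<notin> S" "finite S" using assms finite_subset by auto
    then show "\<omega> (insert e S) * prod y (insert e S) = y e * (\<omega> (insert e S) * prod y S)"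
      by simp
  qed
  finally show ?thesis unfolding Zpoly_def by (simp add: sum_distrib_left)
qed

lemma pderiv_var_Zpoly:
  assumes "finite E" "e \<in> E"
  shows "pderiv_var e (Zpoly E \<omega>) y = Zpoly (E - {e}) (\<lambda>S. \<omega> (insert e S)) y"
proof -
  let ?F = "E - {e}"
  have E: "E = insert e ?F" using assms by auto
  have "Zpoly E \<omega> (y(e := t)) = Zpoly ?F \<omega> y + t * Zpoly ?F (\<lambda>S. \<omega> (insert e S)) y" for t
    by (subst E, subst Zpoly_insert) (use assms in \<open>simp_all add: Zpoly_fun_upd_notin\<close>)
  moreover have "deriv (\<lambda>t. Zpoly ?F \<omega> y + t * Zpoly ?F (\<lambda>S. \<omega> (insert e S)) y) (y e)
      = Zpoly ?F (\<lambda>S. \<omega> (insert e S)) y"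
    by (rule DERIV_imp_deriv) (auto intro!: derivative_eq_intros)
  ultimately show ?thesis unfolding pderiv_var_def by simp
qed

lemma rayleigh_diff_Zpoly:
  assumes "finite E" "e \<in> E" "f \<in> E" "e \<noteq> f"
  shows "rayleigh_diff E \<omega> e f y =
    Zpoly (E - {e, f}) (\<lambda>S. \<omega> (insert e S)) y * Zpoly (E - {e, f}) (\<lambda>S. \<omega> (insert f S)) y
    - Zpoly (E - {e, f}) \<omega> y * Zpoly (E - {e, f}) (\<lambda>S. \<omega> (insert e (insert f S))) y"
proof -
  let ?F = "E - {e, f}"
  have finF: "finite ?F" using assms by simp
  have E1: "E = insert e (insert f ?F)" and E2: "E - {e} = insert f ?F"
    and E3: "E - {f} = insert e ?F" and E4: "E - {f} - {e} = ?F"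
    using assms by auto
  have nf: "f \<notin> ?F" "e \<notin> ?F" "e \<notin> insert f ?F" using assms by auto
  define A where "A = Zpoly ?F \<omega> y"
  define B where "B = Zpoly ?F (\<lambda>S. \<omega> (insert e S)) y"
  define C where "C = Zpoly ?F (\<lambda>S. \<omega> (insert f S)) y"
  define D where "D = Zpoly ?F (\<lambda>S. \<omega> (insert e (insert f S))) y"
  have Z: "Zpoly E \<omega> y = A + y f * C + y e * (B + y f * D)"
    unfolding A_def B_def C_def D_def
    by (subst E1, simp only: Zpoly_insert[OF _ nf(3)] finF finite_insert Zpoly_insert[OF finF nf(1)])
  have Ze: "pderiv_var e (Zpoly E \<omega>) y = B + y f * D"
    unfolding B_def D_def
    by (simp only: pderiv_var_Zpoly[OF assms(1,2)] E2 Zpoly_insert[OF finF nf(1)])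
  have Zf: "pderiv_var f (Zpoly E \<omega>) y = C + y e * D"
    unfolding C_def D_def
    by (simp only: pderiv_var_Zpoly[OF assms(1,3)] E3 Zpoly_insert[OF finF nf(2)] insert_commute)
  have "pderiv_var f (Zpoly E \<omega>) = Zpoly (E - {f}) (\<lambda>S. \<omega> (insert f S))"
    using pderiv_var_Zpoly[OF assms(1,3)] by blast
  then have Zfe: "pderiv_var e (pderiv_var f (Zpoly E \<omega>)) y = D"
    unfolding D_def using pderiv_var_Zpoly[of "E - {f}" e "\<lambda>S. \<omega> (insert f S)" y] assms
    by (simp add: E4 insert_commute)
  show ?thesis unfolding rayleigh_diff_def Z Ze Zf Zfe
    by (fold A_def B_def C_def D_def) (simp add: algebra_simps)
qed

lemma exists_powr_sum_neg:
  fixes P N w :: "'b \<Rightarrow> real"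
  assumes "finite D" and P: "\<And>d. d \<in> D \<Longrightarrow> P d \<ge> 0" and N: "\<And>d. d \<in> D \<Longrightarrow> N d \<ge> 0"
    and d0: "d0 \<in> D" "N d0 > 0" and dominant: "\<And>d. d \<in> D \<Longrightarrow> P d > 0 \<Longrightarrow> w d < w d0"
  shows "\<exists>t>0. (\<Sum>d\<in>D. (P d - N d) * t powr w d) < 0"
proof -
  have "((\<lambda>t. \<Sum>d\<in>D. P d * t powr (w d - w d0)) \<longlongrightarrow> 0) at_top"
  proof (rule tendsto_null_sum)
    fix d assume "d \<in> D"
    show "((\<lambda>t. P d * t powr (w d - w d0)) \<longlongrightarrow> 0) at_top"
    proof (cases "P d > 0")
      case True
      then have "w d - w d0 < 0" using dominant \<open>d \<in> D\<close> by simp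
      then show ?thesis by (intro tendsto_mult_right_zero tendsto_neg_powr filterlim_ident)
    next
      case False
      then show ?thesis using P[OF \<open>d \<in> D\<close>] by simp
    qed
  qed
  then have "\<forall>\<^sub>F t in at_top. (\<Sum>d\<in>D. P d * t powr (w d - w d0)) < N d0"
    using d0(2) by (rule order_tendstoD)
  then have "\<forall>\<^sub>F t in at_top. t > 0 \<and> (\<Sum>d\<in>D. P d * t powr (w d - w d0)) < N d0"
    by (intro eventually_conj) auto
  then obtain T where "\<forall>t\<ge>T. t > 0 \<and> (\<Sum>d\<in>D. P d * t powr (w d - w d0)) < N d0"
    unfolding eventually_at_top_linorder by blast
  then obtain t where t: "t > 0" "(\<Sum>d\<in>D. P d * t powr (w d - w d0)) < N d0"
    by blast
  have "N d0 \<le> (\<Sum>d\<in>D. N d * t powr (w d - w d0))"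
    using member_le_sum[of d0 D "\<lambda>d. N d * t powr (w d - w d0)"] assms t by simp
  with t have "(\<Sum>d\<in>D. (P d - N d) * t powr (w d - w d0)) < 0"
    by (simp add: left_diff_distrib sum_subtractf)
  then have "t powr w d0 * (\<Sum>d\<in>D. (P d - N d) * t powr (w d - w d0)) < 0"
    using t(1) by (simp add: mult_pos_neg)
  also have "t powr w d0 * (\<Sum>d\<in>D. (P d - N d) * t powr (w d - w d0))
      = (\<Sum>d\<in>D. (P d - N d) * (t powr w d0 * t powr (w d - w d0)))"
    by (simp add: sum_distrib_left mult.left_commute)
  also have "\<dots> = (\<Sum>d\<in>D. (P d - N d) * t powr w d)"
    by (simp flip: powr_add)
  finally show ?thesis using t(1) by blast
qed

lemma rayleigh_diff_powr:
  fixes \<sigma> :: "'a \<Rightarrow> real"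
  assumes "finite E" "p \<in> E" "q \<in> E" "p \<noteq> q" "t > 0"
  shows "rayleigh_diff E \<omega> p q (\<lambda>c. t powr \<sigma> c)
    = (\<Sum>(U, V)\<in>Pow (E - {p, q}) \<times> Pow (E - {p, q}).
         (\<omega> (insert p U) * \<omega> (insert q V) - \<omega> U * \<omega> (insert p (insert q V)))
         * t powr (sum \<sigma> U + sum \<sigma> V))"
proof -
  define F where "F = E - {p, q}"
  have Z: "Zpoly F g (\<lambda>c. t powr \<sigma> c) = (\<Sum>U\<in>Pow F. g U * t powr sum \<sigma> U)" for g
    unfolding Zpoly_def using assms(5) by (simp add: powr_sum)
  have monomial: "a * t powr sum \<sigma> U * (b * t powr sum \<sigma> V) = a * b * t powr (sum \<sigma> U + sum \<sigma> V)"
    for a b U V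
    by (simp add: powr_add)
  show ?thesis
    unfolding rayleigh_diff_Zpoly[OF assms(1-4)] F_def[symmetric] Z sum_product
      sum.cartesian_product monomial
    by (simp add: split_def left_diff_distrib sum_subtractf)
qed

lemma mem_support: "S \<in> support E \<omega> \<longleftrightarrow> S \<subseteq> E \<and> \<omega> S > 0"
  unfolding support_def by auto

lemma sum_inter_symdiff_eq:
  fixes m :: "'a \<Rightarrow> real" and A F W :: "'a set"
  defines "\<sigma> \<equiv> \<lambda>c. if c \<in> A then m c else - m c"
  assumes "finite F" "W \<subseteq> F"
  shows "sum m (F \<inter> symdiff A W) = sum \<sigma> (F \<inter> A) - sum \<sigma> W"
proof -
  have fin: "finite W" using assms finite_subset by blast
  have "sum \<sigma> (F \<inter> A) = sum \<sigma> (F \<inter> A - W) + sum \<sigma> (W \<inter> A)"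
    using assms fin by (subst sum.union_disjoint[symmetric]) (auto intro: sum.cong)
  moreover have "sum \<sigma> W = sum \<sigma> (W \<inter> A) + sum \<sigma> (W - A)"
    using fin by (subst sum.union_disjoint[symmetric]) (auto intro: sum.cong)
  moreover have "sum m (F \<inter> symdiff A W) = sum m (F \<inter> A - W) + sum m (W - A)"
    using assms fin by (subst sum.union_disjoint[symmetric]) (auto simp: symdiff_def intro: sum.cong)
  moreover have "sum \<sigma> (F \<inter> A - W) = sum m (F \<inter> A - W)" "sum \<sigma> (W - A) = - sum m (W - A)"
    unfolding \<sigma>_def by (auto simp: sum_negf intro: sum.cong)
  ultimately show ?thesis by simp
qed

lemma symdiff_psubset_if_card_less:
  assumes "finite D" "p \<in> D" "q \<in> D" "p \<in> A \<longleftrightarrow> q \<in> A" "(p \<in> Z) \<noteq> (q \<in> Z)"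
    and "symdiff A Z - {p, q} \<subseteq> D" "card (symdiff A Z - {p, q}) + 2 \<le> card D"
  shows "symdiff A Z \<subset> D"
proof -
  define r where "r = (if (p \<in> A) = (p \<in> Z) then q else p)"
  have sub: "symdiff A Z \<subseteq> insert r (symdiff A Z - {p, q})"
    using assms(4,5) unfolding r_def symdiff_def by auto
  have "finite (symdiff A Z - {p, q})" using assms(1,6) finite_subset by blast
  then have "card (symdiff A Z) \<le> card (symdiff A Z - {p, q}) + 1"
    using card_mono[OF _ sub] by (simp add: card_insert_if split: if_splits)
  moreover have "symdiff A Z \<subseteq> D" using sub assms(2,3,6) r_def by auto
  ultimately show ?thesis using assms(7) by auto
qed

lemma sum_less_imp_subset_card_le:
  fixes m :: "'a \<Rightarrow> real"
  assumes "finite T" and ge_1: "\<And>c. c \<in> T \<Longrightarrow> 1 \<le> m c"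
    and heavy: "\<And>c. c \<in> T - D \<Longrightarrow> M \<le> m c" and "sum m T < M"
  shows "T \<subseteq> D" "real (card T) \<le> sum m T"
proof -
  show "real (card T) \<le> sum m T" using sum_mono[of T "\<lambda>_. 1" m] ge_1 by simp
  show "T \<subseteq> D"
  proof
    fix c assume c: "c \<in> T"
    show "c \<in> D"
    proof (rule ccontr)
      assume "c \<notin> D"
      with c heavy have "M \<le> m c" by blast
      also have "m c \<le> sum m T"
        using member_le_sum[of c T m] assms(1) c ge_1 by force
      finally show False using \<open>sum m T < M\<close> by simp
    qed
  qed
qed

lemma symdiff_psubset_if_weight_less:
  fixes m :: "'a \<Rightarrow> real"
  assumes fin: "finite D" "finite (symdiff A Z)"
    and pq: "p \<in> D" "q \<in> D" "p \<in> A \<longleftrightarrow> q \<in> A" "(p \<in> Z) \<noteq> (q \<in> Z)"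
    and K: "K \<subseteq> D" and ge_1: "\<And>c. c \<notin> K \<Longrightarrow> 1 \<le> m c"
    and heavy: "\<And>c. c \<notin> D \<Longrightarrow> real (card D) \<le> m c"
    and less: "sum m (symdiff A Z - {p, q} - K) + real (card K) < real (card D) - 1"
  shows "symdiff A Z \<subset> D"
proof -
  let ?T = "symdiff A Z - {p, q}"
  have "finite K" using K fin(1) finite_subset by blast
  have sub: "?T - K \<subseteq> D" and weight: "real (card (?T - K)) \<le> sum m (?T - K)"
    using sum_less_imp_subset_card_le[of "?T - K" m D "real (card D)"] fin(2) ge_1 heavy less
    by auto
  have "card ?T \<le> card ((?T - K) \<union> K)"
    using fin(2) \<open>finite K\<close> by (intro card_mono) auto
  also have "\<dots> \<le> card (?T - K) + card K" by (rule card_Un_le)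
  finally have "?T \<subseteq> D" "card ?T + 2 \<le> card D" using sub weight K less by auto
  then show ?thesis using symdiff_psubset_if_card_less[OF fin(1) pq] by simp
qed

locale rayleigh_weight =
  fixes E :: "'a set" and \<omega> :: "'a set \<Rightarrow> real"
  assumes finite_E: "finite E"
    and nonneg: "\<And>S. S \<subseteq> E \<Longrightarrow> \<omega> S \<ge> 0"
    and rayleigh: "rayleigh E \<omega>"
begin

lemma finite_symdiff_support:
  assumes "A \<in> support E \<omega>" "B \<in> support E \<omega>"
  shows "finite (symdiff A B)"
  using assms finite_E by (auto simp: mem_support symdiff_def intro: finite_subset)

text \<open>At y_c = t^(sigma c) a pair (U, V) contributes to the Rayleigh difference at the exponent
  sigma(U) + sigma(V), positively only if U + p and V + q are in the support. If all of these
  exponents were below that of (X, Y), the difference would be negative for large t.\<close>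
lemma support_exchange_weighted:
  fixes \<sigma> :: "'a \<Rightarrow> real"
  assumes pq: "p \<in> E" "q \<in> E" "p \<noteq> q"
    and X: "X \<subseteq> E - {p, q}" "\<omega> X > 0"
    and Y: "Y \<subseteq> E - {p, q}" "\<omega> (insert p (insert q Y)) > 0"
  shows "\<exists>U V. U \<subseteq> E - {p, q} \<and> V \<subseteq> E - {p, q} \<and> \<omega> (insert p U) > 0 \<and> \<omega> (insert q V) > 0
           \<and> sum \<sigma> X + sum \<sigma> Y \<le> sum \<sigma> U + sum \<sigma> V"
proof (rule ccontr)
  define F where "F = E - {p, q}"
  define P where "P = (\<lambda>(U, V). \<omega> (insert p U) * \<omega> (insert q V))"
  define N where "N = (\<lambda>(U, V). \<omega> U * \<omega> (insert p (insert q V)))"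
  define w where "w = (\<lambda>(U, V). sum \<sigma> U + sum \<sigma> V)"
  assume no_exchange: "\<not> ?thesis"
  have dominant: "w d < w (X, Y)" if d: "d \<in> Pow F \<times> Pow F" and pos: "P d > 0" for d
  proof -
    obtain U V where UV: "d = (U, V)" "U \<subseteq> F" "V \<subseteq> F" using d by (cases d) auto
    have "\<omega> (insert p U) \<ge> 0" "\<omega> (insert q V) \<ge> 0"
      using UV pq unfolding F_def by (auto intro!: nonneg)
    with pos have "\<omega> (insert p U) > 0" "\<omega> (insert q V) > 0"
      unfolding P_def UV by (auto simp: zero_less_mult_iff)
    with no_exchange UV have "\<not> sum \<sigma> X + sum \<sigma> Y \<le> sum \<sigma> U + sum \<sigma> V"
      unfolding F_def by blast
    then show ?thesis unfolding w_def UV by simp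
  qed
  have "finite (Pow F \<times> Pow F)" using finite_E F_def by simp
  moreover have "(X, Y) \<in> Pow F \<times> Pow F" "N (X, Y) > 0"
    using X Y F_def N_def by auto
  moreover have "P d \<ge> 0" "N d \<ge> 0" if "d \<in> Pow F \<times> Pow F" for d
    using that pq unfolding F_def P_def N_def by (auto intro!: mult_nonneg_nonneg nonneg)
  ultimately obtain t where t: "t > 0" "(\<Sum>d\<in>Pow F \<times> Pow F. (P d - N d) * t powr w d) < 0"
    using exists_powr_sum_neg[of "Pow F \<times> Pow F" P N "(X, Y)" w] dominant by blast
  moreover have "rayleigh_diff E \<omega> p q (\<lambda>c. t powr \<sigma> c) \<ge> 0"
    using rayleigh pq t(1) unfolding rayleigh_def by simp
  ultimately show False
    unfolding rayleigh_diff_powr[OF finite_E pq t(1)] F_def[symmetric] P_def N_def w_def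
    by (simp add: split_def)
qed

lemma support_exchange_symdiff:
  fixes m :: "'a \<Rightarrow> real"
  assumes A: "A \<in> support E \<omega>" and B: "B \<in> support E \<omega>"
    and pq: "p \<in> symdiff A B" "q \<in> symdiff A B" "p \<noteq> q" "p \<in> A \<longleftrightarrow> q \<in> A"
  obtains Z1 Z2 where "Z1 \<in> support E \<omega>" "p \<in> Z1" "q \<notin> Z1"
    and "Z2 \<in> support E \<omega>" "q \<in> Z2" "p \<notin> Z2"
    and "sum m (symdiff A Z1 - {p, q}) + sum m (symdiff A Z2 - {p, q})
           \<le> sum m (symdiff A B - {p, q})"
proof -
  define F where "F = E - {p, q}"
  define \<sigma> where "\<sigma> c = (if c \<in> A then m c else - m c)" for c
  have AB: "A \<subseteq> E" "B \<subseteq> E" "\<omega> A > 0" "\<omega> B > 0" using A B by (auto simp: mem_support)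
  then have pqE: "p \<in> E" "q \<in> E" using pq by (auto simp: symdiff_def)
  \<comment> \<open>sigma turns the m-weighted distance from A into a linear functional\<close>
  have dist: "sum m (F \<inter> symdiff A W) = sum \<sigma> (F \<inter> A) - sum \<sigma> W" if "W \<subseteq> F" for W
    using sum_inter_symdiff_eq[where m=m and A=A and F=F and W=W] that finite_E
    unfolding F_def \<sigma>_def by auto
  define X where "X = (if p \<in> A then B else A)"
  define Y where "Y = (if p \<in> A then A else B) - {p, q}"
  have "insert p (insert q Y) = (if p \<in> A then A else B)"
    using pq unfolding Y_def symdiff_def by auto
  then have "X \<subseteq> F" "\<omega> X > 0" "Y \<subseteq> F" "\<omega> (insert p (insert q Y)) > 0"
    using AB pq unfolding X_def Y_def F_def symdiff_def by auto
  then obtain U V where UV: "U \<subseteq> F" "V \<subseteq> F" "\<omega> (insert p U) > 0" "\<omega> (insert q V) > 0"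
    "sum \<sigma> X + sum \<sigma> Y \<le> sum \<sigma> U + sum \<sigma> V"
    using support_exchange_weighted[OF pqE pq(3), of X Y \<sigma>] unfolding F_def by blast
  have "F \<inter> symdiff A A = {}" "F \<inter> symdiff A (A - {p, q}) = {}"
    "F \<inter> symdiff A B = symdiff A B - {p, q}" "F \<inter> symdiff A (B - {p, q}) = symdiff A B - {p, q}"
    using AB unfolding F_def symdiff_def by auto
  then have "sum m (F \<inter> symdiff A X) + sum m (F \<inter> symdiff A Y) = sum m (symdiff A B - {p, q})"
    unfolding X_def Y_def by simp
  moreover have "symdiff A (insert p U) - {p, q} = F \<inter> symdiff A U"
    "symdiff A (insert q V) - {p, q} = F \<inter> symdiff A V"
    using AB UV unfolding F_def symdiff_def by auto
  moreover have "X \<subseteq> F" "Y \<subseteq> F" by fact+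
  ultimately have "sum m (symdiff A (insert p U) - {p, q}) + sum m (symdiff A (insert q V) - {p, q})
      \<le> sum m (symdiff A B - {p, q})"
    using dist UV by simp
  moreover have "insert p U \<in> support E \<omega>" "insert q V \<in> support E \<omega>"
    using UV pqE by (auto simp: mem_support F_def)
  ultimately show thesis using that UV(1,2) pq(3) unfolding F_def by blast
qed

lemma support_interval_exchange:
  assumes S: "S \<in> support E \<omega>" and S': "S' \<in> support E \<omega>" and "S \<subseteq> S'"
    and ef: "e \<in> S' - S" "f \<in> S' - S" "e \<noteq> f"
  obtains Z where "Z \<in> support E \<omega>" "S \<subseteq> Z" "Z \<subseteq> S'" "e \<in> Z" "f \<notin> Z"
proof -
  \<comment> \<open>a Z of weight 0 agrees with S outside S' - S\<close>
  define m :: "'a \<Rightarrow> real" where "m c = (if c \<in> S' - S then 0 else 1)" for c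
  have nonneg_m: "0 \<le> m c" for c unfolding m_def by simp
  have D: "symdiff S S' = S' - S" using assms(3) by (auto simp: symdiff_def)
  then have "e \<in> symdiff S S'" "f \<in> symdiff S S'" "e \<in> S \<longleftrightarrow> f \<in> S" using ef by auto
  then obtain Z Z' where Z: "Z \<in> support E \<omega>" "e \<in> Z" "f \<notin> Z"
    and sums: "sum m (symdiff S Z - {e, f}) + sum m (symdiff S Z' - {e, f})
                 \<le> sum m (symdiff S S' - {e, f})"
    using support_exchange_symdiff[OF S S' _ _ ef(3), of m] by blast
  have "sum m (symdiff S S' - {e, f}) = 0" unfolding D m_def by simp
  moreover have "0 \<le> sum m (symdiff S Z - {e, f})" "0 \<le> sum m (symdiff S Z' - {e, f})"
    using nonneg_m by (simp_all add: sum_nonneg)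
  ultimately have "sum m (symdiff S Z - {e, f}) = 0" using sums by linarith
  moreover have "finite (symdiff S Z - {e, f})" using finite_symdiff_support[OF S Z(1)] by simp
  ultimately have "\<forall>c \<in> symdiff S Z - {e, f}. m c = 0"
    using sum_nonneg_eq_0_iff[of "symdiff S Z - {e, f}" m] nonneg_m by simp
  then have "symdiff S Z - {e, f} \<subseteq> S' - S"
    unfolding m_def by (metis (mono_tags) subsetI zero_neq_one)
  then have "S \<subseteq> Z" "Z \<subseteq> S'" using ef assms(3) unfolding symdiff_def by blast+
  then show thesis using that Z by blast
qed

lemma insert_mem_support:
  assumes "S \<in> support E \<omega>" "S' \<in> support E \<omega>" "S \<subseteq> S'" "e \<in> S' - S"
  shows "insert e S \<in> support E \<omega>"
  using assms(2-4)
proof (induction "card (S' - S)" arbitrary: S' rule: less_induct)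
  case less
  show ?case
  proof (cases "S' = insert e S")
    case True
    with less.prems show ?thesis by simp
  next
    case False
    then obtain f where f: "f \<in> S' - S" "e \<noteq> f" using less.prems by blast
    obtain Z where Z: "Z \<in> support E \<omega>" "S \<subseteq> Z" "Z \<subseteq> S'" "e \<in> Z" "f \<notin> Z"
      using support_interval_exchange[OF assms(1) less.prems(1,2,3) f] by blast
    have "card (Z - S) < card (S' - S)"
    proof (rule psubset_card_mono)
      show "finite (S' - S)"
        using less.prems(1) finite_E by (auto simp: mem_support intro: finite_subset)
      show "Z - S \<subset> S' - S" using Z(3,5) f by auto
    qed
    then show ?thesis using less.hyps Z(1,2,4) less.prems(3) by blast
  qed
qed

lemma support_convex:
  assumes S: "S \<in> support E \<omega>" and S': "S' \<in> support E \<omega>" and "S \<subseteq> T" "T \<subseteq> S'"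
  shows "T \<in> support E \<omega>"
proof -
  have fin: "finite (T - S)"
    using S' assms(4) finite_E by (auto simp: mem_support intro: finite_subset)
  have "S \<union> U \<in> support E \<omega>" if "U \<subseteq> T - S" for U
    using finite_subset[OF that fin] that
  proof (induction U rule: finite_induct)
    case empty
    then show ?case using S by simp
  next
    case (insert x U)
    then have "insert x (S \<union> U) \<in> support E \<omega>"
      using assms(3,4) by (intro insert_mem_support[OF _ S']) auto
    then show ?case by simp
  qed
  from this[OF order_refl] show ?thesis using assms(3) by (simp add: Un_absorb1)
qed

lemma exists_support_symdiff_psubset_pair_with:
  assumes A: "A \<in> support E \<omega>" and B: "B \<in> support E \<omega>" and e: "e \<in> symdiff A B"
    and p: "p \<in> symdiff A B" "p \<noteq> e" "p \<in> A \<longleftrightarrow> e \<in> A"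
  shows "\<exists>Z\<in>support E \<omega>. e \<in> symdiff A Z \<and> symdiff A Z \<subset> symdiff A B"
proof -
  define D where "D = symdiff A B"
  define n where "n = card D"
  have finD: "finite D" unfolding D_def using finite_symdiff_support[OF A B] .
  have card_pe: "card (D - {p, e}) = n - 2"
    using finD p e unfolding n_def D_def by (subst card_Diff_subset) auto
  have n2: "2 \<le> n"
    using card_mono[OF finD, of "{p, e}"] p e unfolding n_def D_def by auto
  \<comment> \<open>the weight n outside D keeps both exchanged sets inside D\<close>
  define m :: "'a \<Rightarrow> real" where "m c = (if c \<in> D then 1 else real n)" for c
  have m_ge_1: "1 \<le> m c" for c using n2 unfolding m_def by simp
  obtain Z1 Z2 where Z: "Z1 \<in> support E \<omega>" "p \<in> Z1" "e \<notin> Z1" "Z2 \<in> support E \<omega>" "e \<in> Z2" "p \<notin> Z2"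
    and sums: "sum m (symdiff A Z1 - {p, e}) + sum m (symdiff A Z2 - {p, e}) \<le> sum m (D - {p, e})"
    using support_exchange_symdiff[OF A B p(1) e p(2) p(3), of m] unfolding D_def by blast
  have "sum m (D - {p, e}) = real n - 2"
    using card_pe n2 unfolding m_def by simp
  moreover have nonneg: "0 \<le> sum m T" for T
    using m_ge_1 by (simp add: sum_nonneg order.trans[OF zero_le_one])
  ultimately have bounds: "sum m (symdiff A Z1 - {p, e}) \<le> real n - 2"
    "sum m (symdiff A Z2 - {p, e}) \<le> real n - 2"
    using sums nonneg by (smt (verit))+
  have heavy: "real (card D) \<le> m c" if "c \<notin> D" for c
    using that unfolding m_def n_def by simp
  have small: "symdiff A Z \<subset> D"
    if "Z \<in> support E \<omega>" "(p \<in> Z) \<noteq> (e \<in> Z)" "sum m (symdiff A Z - {p, e}) \<le> real n - 2" for Z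
    using symdiff_psubset_if_weight_less[where m=m and K="{}",
        OF finD finite_symdiff_support[OF A that(1)] _ _ p(3) that(2) _ _ heavy] that(3) p(1) e m_ge_1 unfolding D_def n_def by simp
  have "symdiff A Z1 \<subset> D" using small[OF Z(1) _ bounds(1)] Z(2,3) by blast
  moreover have "symdiff A Z2 \<subset> D" using small[OF Z(4) _ bounds(2)] Z(5,6) by blast
  moreover have "e \<in> symdiff A Z1 \<or> e \<in> symdiff A Z2" using Z by (auto simp: symdiff_def)
  ultimately show ?thesis using Z(1,4) unfolding D_def by blast
qed

lemma support_exchange_moving:
  fixes m :: "'a \<Rightarrow> real"
  assumes A: "A \<in> support E \<omega>" and B: "B \<in> support E \<omega>"
    and pq: "p \<in> symdiff A B" "q \<in> symdiff A B" "p \<noteq> q" "p \<in> A \<longleftrightarrow> q \<in> A"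
    and e: "e \<notin> {p, q}" and nonneg: "\<And>c. c \<noteq> e \<Longrightarrow> 0 \<le> m c"
    and neg: "sum m (symdiff A B - {p, q}) < 0"
  obtains Z where "Z \<in> support E \<omega>" "(p \<in> Z) \<noteq> (q \<in> Z)" "e \<in> symdiff A Z"
    "2 * sum m (symdiff A Z - {p, q} - {e}) \<le> sum m (symdiff A B - {p, q}) - 2 * m e"
proof -
  obtain Z1 Z2 where Z: "Z1 \<in> support E \<omega>" "p \<in> Z1" "q \<notin> Z1" "Z2 \<in> support E \<omega>" "q \<in> Z2" "p \<notin> Z2"
    and sums: "sum m (symdiff A Z1 - {p, q}) + sum m (symdiff A Z2 - {p, q})
                 \<le> sum m (symdiff A B - {p, q})"
    using support_exchange_symdiff[OF A B pq, of m] by blast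
  have remove_e: "sum m T = sum m (T - {e}) + (if e \<in> T then m e else 0)" if "finite T" for T
    using sum_diff1[OF that, of m e] by simp
  have rest_nonneg: "0 \<le> sum m (T - {e})" for T
    using nonneg by (intro sum_nonneg) simp
  have fin: "finite (symdiff A Z1 - {p, q})" "finite (symdiff A Z2 - {p, q})"
    using finite_symdiff_support[OF A Z(1)] finite_symdiff_support[OF A Z(4)] by simp_all
  have "e \<in> symdiff A Z \<longleftrightarrow> e \<in> symdiff A Z - {p, q}" for Z using e by simp
  then have "(e \<in> symdiff A Z1 \<and> 2 * sum m (symdiff A Z1 - {p, q} - {e})
                \<le> sum m (symdiff A B - {p, q}) - 2 * m e)
      \<or> (e \<in> symdiff A Z2 \<and> 2 * sum m (symdiff A Z2 - {p, q} - {e})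
                \<le> sum m (symdiff A B - {p, q}) - 2 * m e)"
    using sums neg remove_e[OF fin(1)] remove_e[OF fin(2)]
      rest_nonneg[of "symdiff A Z1 - {p, q}"] rest_nonneg[of "symdiff A Z2 - {p, q}"]
    by (smt (verit))
  then show thesis using that Z(1-6) by (elim disjE conjE) auto
qed

lemma exists_support_symdiff_psubset_pair_without:
  assumes A: "A \<in> support E \<omega>" and B: "B \<in> support E \<omega>" and e: "e \<in> symdiff A B"
    and pq: "p \<in> symdiff A B - {e}" "q \<in> symdiff A B - {e}" "p \<noteq> q" "p \<in> A \<longleftrightarrow> q \<in> A"
  shows "\<exists>Z\<in>support E \<omega>. e \<in> symdiff A Z \<and> symdiff A Z \<subset> symdiff A B"
proof -
  define D where "D = symdiff A B"
  define n where "n = card D"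
  have finD: "finite D" unfolding D_def using finite_symdiff_support[OF A B] .
  have "D - {p, q} - {e} = D - {p, q, e}" by auto
  then have card_pqe: "card (D - {p, q} - {e}) = n - 3"
    using finD pq e unfolding n_def D_def by (simp add: card_Diff_subset)
  have n3: "3 \<le> n"
    using card_mono[OF finD, of "{p, q, e}"] pq e unfolding n_def D_def by auto
  \<comment> \<open>weight n outside D keeps Z inside D; the weight of e makes that of B negative\<close>
  define m :: "'a \<Rightarrow> real" where
    "m c = (if c \<notin> D then real n else if c = e then 2 - real n else 1)" for c
  have m_ge_1: "1 \<le> m c" if "c \<noteq> e" for c using that n3 unfolding m_def by simp
  have heavy: "real (card D) \<le> m c" if "c \<notin> D" for c
    using that unfolding m_def n_def by simp
  have "sum m (D - {p, q} - {e}) = real n - 3"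
    using card_pqe n3 unfolding m_def by simp
  moreover have "e \<in> D - {p, q}" using pq e unfolding D_def by auto
  ultimately have "sum m (D - {p, q}) = -1"
    using sum.remove[OF _ \<open>e \<in> D - {p, q}\<close>, of m] finD unfolding m_def by simp
  moreover have "e \<notin> {p, q}" "\<And>c. c \<noteq> e \<Longrightarrow> 0 \<le> m c" using pq m_ge_1 by force+
  ultimately obtain Z where Z: "Z \<in> support E \<omega>" "(p \<in> Z) \<noteq> (q \<in> Z)" "e \<in> symdiff A Z"
    "2 * sum m (symdiff A Z - {p, q} - {e}) \<le> -1 - 2 * m e"
    using support_exchange_moving[OF A B pq(1,2)[THEN DiffD1] pq(3,4), of e m] unfolding D_def
    by fastforce
  then have "symdiff A Z \<subset> D"
    using symdiff_psubset_if_weight_less[where m=m and K="{e}",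
        OF finD finite_symdiff_support[OF A Z(1)] _ _ pq(4) Z(2) _ _ heavy] pq e m_ge_1
    unfolding m_def D_def n_def by simp
  then show ?thesis using Z(1,3) unfolding D_def by blast
qed

lemma exists_support_symdiff_psubset:
  assumes A: "A \<in> support E \<omega>" and B: "B \<in> support E \<omega>" and e: "e \<in> symdiff A B"
    and "3 \<le> card (symdiff A B)"
  shows "\<exists>Z\<in>support E \<omega>. e \<in> symdiff A Z \<and> symdiff A Z \<subset> symdiff A B"
proof -
  have fin: "finite (symdiff A B - {e})" using finite_symdiff_support[OF A B] by simp
  have "card (symdiff A B - {e}) = card (symdiff A B) - 1"
    using finite_symdiff_support[OF A B] e by (simp add: card_Diff_singleton)
  then have "\<not> card (symdiff A B - {e}) \<le> Suc 0" using assms(4) by simp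
  then have "\<not> (\<forall>g\<in>symdiff A B - {e}. \<forall>h\<in>symdiff A B - {e}. g = h)"
    using card_le_Suc0_iff_eq[OF fin] by blast
  then obtain g h where gh: "g \<in> symdiff A B - {e}" "h \<in> symdiff A B - {e}" "g \<noteq> h"
    by blast
  consider "g \<in> A \<longleftrightarrow> h \<in> A" | "g \<in> A \<longleftrightarrow> e \<in> A" | "h \<in> A \<longleftrightarrow> e \<in> A" by blast
  then show ?thesis
  proof cases
    case 1
    then show ?thesis using exists_support_symdiff_psubset_pair_without[OF A B e gh] by blast
  next
    case 2
    then show ?thesis using exists_support_symdiff_psubset_pair_with[OF A B e, of g] gh(1) by blast
  next
    case 3
    then show ?thesis using exists_support_symdiff_psubset_pair_with[OF A B e, of h] gh(2) by blast
  qed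
qed

lemma support_delta_exchange:
  assumes A: "A \<in> support E \<omega>" and "B \<in> support E \<omega>" "e \<in> symdiff A B"
  shows "\<exists>f\<in>symdiff A B. symdiff A {e, f} \<in> support E \<omega>"
  using assms(2,3)
proof (induction "card (symdiff A B)" arbitrary: B rule: less_induct)
  case less
  have fin: "finite (symdiff A B)" using finite_symdiff_support[OF A less.prems(1)] .
  show ?case
  proof (cases "card (symdiff A B) \<le> 2")
    case True
    then have "card (symdiff A B - {e}) \<le> Suc 0"
      using fin less.prems(2) by (simp add: card_Diff_singleton)
    then have single: "\<forall>g\<in>symdiff A B - {e}. \<forall>h\<in>symdiff A B - {e}. g = h"
      using card_le_Suc0_iff_eq[of "symdiff A B - {e}"] fin by simp
    obtain f where f: "f \<in> symdiff A B" "symdiff A B \<subseteq> {e, f}"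
    proof (cases "symdiff A B - {e} = {}")
      case True
      then show thesis using that[of e] less.prems(2) by blast
    next
      case False
      then obtain f where "f \<in> symdiff A B - {e}" by blast
      then show thesis using that[of f] single by blast
    qed
    then have "symdiff A B = {e, f}" using less.prems(2) by blast
    moreover have "symdiff A (symdiff A B) = B" by (auto simp: symdiff_def)
    ultimately have "symdiff A {e, f} = B" by simp
    then show ?thesis using f(1) less.prems(1) by (intro bexI[of _ f]) simp_all
  next
    case False
    then obtain Z where Z: "Z \<in> support E \<omega>" "e \<in> symdiff A Z" "symdiff A Z \<subset> symdiff A B"
      using exists_support_symdiff_psubset[OF A less.prems] by force
    then have "card (symdiff A Z) < card (symdiff A B)" using fin by (simp add: psubset_card_mono)
    then obtain f where "f \<in> symdiff A Z" "symdiff A {e, f} \<in> support E \<omega>"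
      using less.hyps[OF _ Z(1,2)] by blast
    then show ?thesis using Z(3) by blast
  qed
qed

end

theorem theorem4p6:
  fixes E :: "'a set" and Q :: "'a set set"
  assumes "finite E"
    and "Q \<subseteq> Pow E"
    and "weakly_rayleigh E Q"
  shows "convex_setsystem Q \<and> delta_matroid Q"
proof -
  obtain \<omega> where "\<forall>S\<in>Pow E. \<omega> S \<ge> 0" and Q: "support E \<omega> = Q" and "rayleigh E \<omega>"
    using assms(3) unfolding weakly_rayleigh_def by blast
  then interpret rayleigh_weight E \<omega> using assms(1) by unfold_locales auto
  have "convex_setsystem (support E \<omega>)"
    unfolding convex_setsystem_def using support_convex by blast
  moreover have "delta_matroid (support E \<omega>)"
    unfolding delta_matroid_def using support_delta_exchange by blast
  ultimately show ?thesis using Q by simp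
qed

end
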